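(* Let $(Q,F)$ be a finite ice quiver with $Q_0=\{1,\dots,m\}$, $F_0=\{n+1,\dots,m\}$, whose Euler matrix $\widehat B$ satisfies $\det\widehat B\neq0$, and let $(\widetilde B,\Lambda)$ be its associated compatible pair. If $v\in Q_0\setminus F_0$ is an unfrozen vertex not incident to loops or $2$-cycles, then the Euler matrix of $\mu_v^{\mathrm{FZ}}(Q,F)$ is invertible and $(\mu_v(\widetilde B),\mu_v(\Lambda))$ is the compatible pair associated with $\mu_v^{\mathrm{FZ}}(Q,F)$.
   Context: Euler matrix: $\widehat B=(b_{ij})_{1\le i,j\le m}$ with $b_{ii}=0$ for $i\le n$, $b_{ii}=1$ for $i>n$, and $b_{ij}=\#\{\text{unfrozen arrows } i\to j\}-\#\{\text{arrows } j\to i\}$ for $i\neq j$. The associated compatible pair is $(\widetilde B,\Lambda)$ with $\widetilde B$ the first $n$ columns of $\widehat B$ and $\Lambda=|\det\widehat B|(\widehat B^{-T}-\widehat B^{-1})$. Mutation rules: $\mu_v(\widetilde B)=(b'_{ij})$ with $b'_{ij}=-b_{ij}$ if $i=v$ or $j=v$, and $b'_{ij}=b_{ij}+[b_{iv}]_+[b_{vj}]_+-[-b_{iv}]_+[-b_{vj}]_+$ otherwise ($[x]_+=\max\{x,0\}$). $\mu_v(\Lambda)=(\lambda'_{ij})$ with $\lambda'_{iv}=-\lambda_{iv}+\sum_{l}[b_{lv}]_+\lambda_{il}$ for $i\neq v$, $\lambda'_{vj}=-\lambda_{vj}+\sum_l[b_{lv}]_+\lambda_{lj}$ for $j\neq v$,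 and $\lambda'_{ij}=\lambda_{ij}$ otherwise. Extended Fomin–Zelevinsky mutation $\mu^{\mathrm{FZ}}_v(Q,F)$: (1) for each pair of arrows $\alpha:u\to v$, $\beta:v\to w$ add an unfrozen arrow $u\to w$; (2) reverse every arrow incident to $v$; (3) remove a maximal collection of $2$-cycles consisting of unfrozen arrows; (4) replace each $2$-cycle in a maximal collection of $2$-cycles containing exactly one frozen arrow by a frozen arrow in the direction of the unfrozen arrow of that $2$-cycle. The frozen vertices are unchanged. *)

theory Defs
  imports "Jordan_Normal_Form.Determinant" "Jordan_Normal_Form.Gauss_Jordan_Elimination"
begin

text \<open>Ice quivers on the vertex set {0..<m} (0-based relabelling of {1..m}); the frozen
  vertices are {n..<m} and the unfrozen ones {0..<n}.  A (finite) quiver is recorded up to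
  isomorphism by its arrow multiplicities: uarr i j = number of unfrozen arrows i -> j,
  farr i j = number of frozen arrows i -> j.\<close>

record iquiver =
  uarr :: "nat \<Rightarrow> nat \<Rightarrow> nat"
  farr :: "nat \<Rightarrow> nat \<Rightarrow> nat"

definition arrs :: "iquiver \<Rightarrow> nat \<Rightarrow> nat \<Rightarrow> nat" where
  "arrs Q i j = uarr Q i j + farr Q i j"

definition ice_quiver :: "nat \<Rightarrow> nat \<Rightarrow> iquiver \<Rightarrow> bool" where
  "ice_quiver m n Q \<longleftrightarrow> n \<le> m \<and>
     (\<forall>i j. arrs Q i j \<noteq> 0 \<longrightarrow> i < m \<and> j < m) \<and>
     (\<forall>i j. farr Q i j \<noteq> 0 \<longrightarrow> n \<le> i \<and> n \<le> j)"

definition euler_matrix :: "nat \<Rightarrow> nat \<Rightarrow> iquiver \<Rightarrow> int mat" where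
  "euler_matrix m n Q = mat m m (\<lambda>(i,j).
     if i = j then (if i < n then 0 else 1)
     else int (uarr Q i j) - int (arrs Q j i))"

definition pos :: "int \<Rightarrow> int" where
  "pos x = max x 0"

definition Btilde :: "nat \<Rightarrow> nat \<Rightarrow> iquiver \<Rightarrow> int mat" where
  "Btilde m n Q = mat m n (\<lambda>(i,j). euler_matrix m n Q $$ (i,j))"

definition Lambda :: "nat \<Rightarrow> nat \<Rightarrow> iquiver \<Rightarrow> rat mat" where
  "Lambda m n Q = (let Bh = map_mat rat_of_int (euler_matrix m n Q);
                       Bi = the (mat_inverse Bh)
                   in of_int \<bar>det (euler_matrix m n Q)\<bar> \<cdot>\<^sub>m (transpose_mat Bi - Bi))"

definition mut_B :: "nat \<Rightarrow> int mat \<Rightarrow> int mat" where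
  "mut_B v B = mat (dim_row B) (dim_col B) (\<lambda>(i,j).
     if i = v \<or> j = v then - (B $$ (i,j))
     else B $$ (i,j) + pos (B $$ (i,v)) * pos (B $$ (v,j))
                     - pos (- B $$ (i,v)) * pos (- B $$ (v,j)))"

definition mut_L :: "nat \<Rightarrow> int mat \<Rightarrow> rat mat \<Rightarrow> rat mat" where
  "mut_L v B L = mat (dim_row L) (dim_col L) (\<lambda>(i,j).
     if i \<noteq> v \<and> j = v then
        - L $$ (i,v) + (\<Sum>l<dim_row B. of_int (pos (B $$ (l,v))) * L $$ (i,l))
     else if i = v \<and> j \<noteq> v then
        - L $$ (v,j) + (\<Sum>l<dim_row B. of_int (pos (B $$ (l,v))) * L $$ (l,j))
     else L $$ (i,j))"

text \<open>Step 1: add an unfrozen arrow u -> w for each pair u -> v -> w.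
  Step 2: reverse all arrows incident to v.
  Step 3: remove a maximal collection of unfrozen 2-cycles (between distinct vertices).
  Step 4: replace each 2-cycle of a maximal collection of 2-cycles with exactly one frozen
          arrow by a frozen arrow in the direction of its unfrozen arrow.\<close>
definition fz_mut :: "nat \<Rightarrow> iquiver \<Rightarrow> iquiver" where
  "fz_mut v Q = (let
      A1 = (\<lambda>i j. uarr Q i j + arrs Q i v * arrs Q v j);
      F1 = farr Q;
      A2 = (\<lambda>i j. if i = v \<or> j = v then A1 j i else A1 i j);
      F2 = (\<lambda>i j. if i = v \<or> j = v then F1 j i else F1 i j);
      A3 = (\<lambda>i j. if i = j then A2 i j else A2 i j - min (A2 i j) (A2 j i));
      k  = (\<lambda>i j. if i = j then 0 else min (A3 i j) (F2 j i));
      A4 = (\<lambda>i j. A3 i j - k i j);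
      F4 = (\<lambda>i j. F2 i j - k j i + k i j)
    in \<lparr>uarr = A4, farr = F4\<rparr>)"

end

theory Submission
  imports Defs
begin

text \<open>Mutation at an unfrozen vertex \<open>v\<close> without loops or 2-cycles is a congruence.
  Let \<open>E\<close> agree with the identity matrix except in column \<open>v\<close>, where \<open>E\<^sub>v\<^sub>v = -1\<close>
  and \<open>E\<^sub>i\<^sub>v = [b\<^sub>i\<^sub>v]\<^sub>+\<close>. As \<open>v\<close> is unfrozen, row and column \<open>v\<close> of the Euler matrix
  \<open>B\<close> are skew-symmetric with zero diagonal entry, and then the matrix mutation of the whole
  square matrix \<open>B\<close> at \<open>v\<close> is \<open>E B E\<^sup>T\<close>. Steps (3) and (4) of the Fomin--Zelevinsky
  mutation only trade arrows inside 2-cycles, so they preserve every off-diagonal Euler entry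
  \<open>#(i \<rightarrow> j unfrozen) - #(j \<rightarrow> i)\<close>, and since no 2-cycle passes through \<open>v\<close> we have
  \<open>[b\<^sub>i\<^sub>v]\<^sub>+ = #(i \<rightarrow> v)\<close>, so steps (1) and (2) produce exactly the mutation formula: the Euler
  matrix of the mutated quiver is \<open>E B E\<^sup>T\<close>.

  Since \<open>E\<^sup>2 = 1\<close>, the determinant is unchanged and \<open>(E B E\<^sup>T)\<^sup>-\<^sup>1 = E\<^sup>T B\<^sup>-\<^sup>1 E\<close>, so the
  new \<open>\<Lambda>\<close> is \<open>E\<^sup>T \<Lambda> E\<close>. Expanding \<open>E\<^sup>T \<Lambda> E\<close> entrywise gives the mutation rule for
  \<open>\<Lambda>\<close>; its \<open>(v,v)\<close> entry vanishes on both sides by skew-symmetry.\<close>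

definition mutation_mat :: "nat \<Rightarrow> nat \<Rightarrow> (nat \<Rightarrow> 'a::comm_ring_1) \<Rightarrow> 'a mat" where
  "mutation_mat m v p = mat m m (\<lambda>(i,j).
     if j = v then (if i = v then -1 else p i) else if i = j then 1 else 0)"

lemma dim_mutation_mat [simp]:
  "dim_row (mutation_mat m v p) = m" "dim_col (mutation_mat m v p) = m"
  by (simp_all add: mutation_mat_def)

lemma mutation_mat_carrier [simp]: "mutation_mat m v p \<in> carrier_mat m m"
  by (simp add: carrier_matI)

lemma index_mutation_mat:
  "i < m \<Longrightarrow> j < m \<Longrightarrow> mutation_mat m v p $$ (i,j) =
     (if j = v then (if i = v then -1 else p i) else if i = j then 1 else 0)"
  by (simp add: mutation_mat_def)

lemma map_mat_of_int_mutation_mat: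
  "map_mat of_int (mutation_mat m v p) = mutation_mat m v (\<lambda>i. of_int (p i))"
  by (rule eq_matI) (auto simp: mutation_mat_def)

lemma index_mutation_mat_mult:
  assumes X: "X \<in> carrier_mat m k" and i: "i < m" and j: "j < k" and v: "v < m"
  shows "(mutation_mat m v p * X) $$ (i,j) =
    (if i = v then - X $$ (v,j) else X $$ (i,j) + p i * X $$ (v,j))"
proof -
  have "(mutation_mat m v p * X) $$ (i,j) = (\<Sum>l\<in>{0..<m}. mutation_mat m v p $$ (i,l) * X $$ (l,j))"
    using X i j by (simp add: scalar_prod_def)
  also have "\<dots> = (\<Sum>l\<in>{0..<m}. (if l = v then (if i = v then -1 else p i) * X $$ (v,j) else 0)
      + (if l = i \<and> i \<noteq> v then X $$ (i,j) else 0))"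
    using i by (intro sum.cong) (auto simp: index_mutation_mat)
  finally show ?thesis
    using i v by (simp add: sum.distrib)
qed

lemma index_transpose_mutation_mat_mult:
  assumes Y: "Y \<in> carrier_mat m k" and i: "i < m" and j: "j < k" and v: "v < m" and pv: "p v = 0"
  shows "(transpose_mat (mutation_mat m v p) * Y) $$ (i,j) =
    (if i = v then - Y $$ (v,j) + (\<Sum>l<m. p l * Y $$ (l,j)) else Y $$ (i,j))"
proof -
  have "(transpose_mat (mutation_mat m v p) * Y) $$ (i,j) =
      (\<Sum>l\<in>{0..<m}. mutation_mat m v p $$ (l,i) * Y $$ (l,j))"
    using Y i j by (simp add: scalar_prod_def)
  also have "\<dots> = (\<Sum>l\<in>{0..<m}. (if i = v then p l * Y $$ (l,j) else 0)
      + (if l = i then (if i = v then - Y $$ (v,j) else Y $$ (i,j)) else 0))"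
    using i pv by (intro sum.cong) (auto simp: index_mutation_mat)
  finally show ?thesis
    using i v by (simp add: sum.distrib atLeast0LessThan)
qed

lemma index_mult_transpose_mutation_mat:
  assumes Y: "Y \<in> carrier_mat k m" and i: "i < k" and j: "j < m" and v: "v < m"
  shows "(Y * transpose_mat (mutation_mat m v p)) $$ (i,j) =
    (if j = v then - Y $$ (i,v) else Y $$ (i,j) + p j * Y $$ (i,v))"
proof -
  have "(Y * transpose_mat (mutation_mat m v p)) $$ (i,j) =
      (mutation_mat m v p * transpose_mat Y) $$ (j,i)"
    using Y i j by (simp add: comm_scalar_prod[of _ m])
  then show ?thesis
    using index_mutation_mat_mult[of "transpose_mat Y" m k j i v p] Y i j v by simp
qed

lemma index_mult_mutation_mat:
  assumes X: "X \<in> carrier_mat k m" and i: "i < k" and j: "j < m" and v: "v < m" and pv: "p v = 0"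
  shows "(X * mutation_mat m v p) $$ (i,j) =
    (if j = v then - X $$ (i,v) + (\<Sum>l<m. p l * X $$ (i,l)) else X $$ (i,j))"
proof -
  have "(X * mutation_mat m v p) $$ (i,j) =
      (transpose_mat (mutation_mat m v p) * transpose_mat X) $$ (j,i)"
    using X i j by (simp add: comm_scalar_prod[of _ m])
  then show ?thesis
    using index_transpose_mutation_mat_mult[of "transpose_mat X" m k j i v p] X i j v pv by simp
qed

lemma mutation_mat_involution:
  assumes "v < m"
  shows "mutation_mat m v p * mutation_mat m v p = 1\<^sub>m m"
proof (rule eq_matI)
  fix i j assume "i < dim_row (1\<^sub>m m :: 'a mat)" "j < dim_col (1\<^sub>m m :: 'a mat)"
  then have i: "i < m" and j: "j < m" by simp_all
  show "(mutation_mat m v p * mutation_mat m v p) $$ (i,j) = 1\<^sub>m m $$ (i,j)"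
    unfolding index_mutation_mat_mult[OF mutation_mat_carrier i j assms]
    using i j assms by (simp add: index_mutation_mat)
qed simp_all

lemma det_involution_congruence:
  fixes E B :: "'a::comm_ring_1 mat"
  assumes E: "E \<in> carrier_mat m m" and B: "B \<in> carrier_mat m m" and EE: "E * E = 1\<^sub>m m"
  shows "det (E * B * transpose_mat E) = det B"
proof -
  have "det E * det E = 1"
    using det_mult[OF E E] EE by simp
  moreover have "det (E * B * transpose_mat E) = det E * det B * det E"
    using E B by (simp add: det_mult[of _ m] det_transpose)
  ultimately show ?thesis
    by (simp add: algebra_simps)
qed

lemma transpose_congruence:
  fixes E X :: "'a::comm_semiring_0 mat"
  assumes "E \<in> carrier_mat k k" and "X \<in> carrier_mat k k"
  shows "transpose_mat (transpose_mat E * X * E) = transpose_mat E * transpose_mat X * E"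
proof -
  have "transpose_mat (transpose_mat E * X * E) =
      transpose_mat E * transpose_mat (transpose_mat E * X)"
    using assms by (intro transpose_mult) auto
  also have "\<dots> = transpose_mat E * transpose_mat X * E"
    using assms by (simp add: transpose_mult[of "transpose_mat E" k k X k])
  finally show ?thesis .
qed

lemma congruence_smult_minus:
  fixes E X Y :: "'a::comm_ring mat"
  assumes E: "E \<in> carrier_mat k k" and Y: "Y \<in> carrier_mat k k" and X: "X \<in> carrier_mat k k"
  shows "transpose_mat E * (d \<cdot>\<^sub>m (Y - X)) * E =
    d \<cdot>\<^sub>m (transpose_mat E * Y * E - transpose_mat E * X * E)"
proof -
  have Et: "transpose_mat E \<in> carrier_mat k k"
    using E by simp
  have "transpose_mat E * (d \<cdot>\<^sub>m (Y - X)) * E = (d \<cdot>\<^sub>m (transpose_mat E * (Y - X))) * E"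
    using Et X Y by (subst mult_smult_distrib[OF Et]) auto
  also have "\<dots> = d \<cdot>\<^sub>m ((transpose_mat E * Y - transpose_mat E * X) * E)"
    using E Et X Y
    by (subst mult_smult_assoc_mat[of _ k k _ k]) (auto simp: mult_minus_distrib_mat[OF Et Y X])
  also have "\<dots> = d \<cdot>\<^sub>m (transpose_mat E * Y * E - transpose_mat E * X * E)"
    using E Et X Y by (subst minus_mult_distrib_mat[of _ k k]) auto
  finally show ?thesis .
qed

lemma skew_mat_diag_zero:
  fixes M :: "'a::linordered_ab_group_add mat"
  assumes "transpose_mat M = - M" and "i < dim_row M" and "i < dim_col M"
  shows "M $$ (i,i) = 0"
  using arg_cong[OF assms(1), of "\<lambda>A. A $$ (i,i)"] assms(2,3) by simp

lemma mat_inverse_exists: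
  fixes A :: "'a::field mat"
  assumes A: "A \<in> carrier_mat k k" and "det A \<noteq> 0"
  obtains C where "mat_inverse A = Some C"
  using mat_inverse(1)[OF A] det_non_zero_imp_unit[OF A assms(2), of "()"] by fastforce

lemma mat_inverse_eq_Some:
  fixes A C :: "'a::field mat"
  assumes A: "A \<in> carrier_mat k k" and C: "C \<in> carrier_mat k k" and AC: "A * C = 1\<^sub>m k"
  shows "mat_inverse A = Some C"
proof -
  have "det A \<noteq> 0"
    using det_mult[OF A C] AC by auto
  then obtain C' where C': "mat_inverse A = Some C'"
    using mat_inverse_exists[OF A] by blast
  then have C'A: "C' * A = 1\<^sub>m k" and C'c: "C' \<in> carrier_mat k k"
    using mat_inverse(2)[OF A] by auto
  have "C' = C' * (A * C)"
    using C'c by (simp add: AC)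
  also have "\<dots> = C"
    using A C C'c by (simp add: assoc_mult_mat[symmetric, of _ k k _ k _ k] C'A)
  finally show ?thesis
    using C' by simp
qed

lemma mat_inverse_involution_congruence:
  fixes A E :: "'a::field mat"
  assumes A: "A \<in> carrier_mat k k" and E: "E \<in> carrier_mat k k" and EE: "E * E = 1\<^sub>m k"
    and Ai: "mat_inverse A = Some Ai"
  shows "mat_inverse (E * A * transpose_mat E) = Some (transpose_mat E * Ai * E)"
proof -
  have AAi: "A * Ai = 1\<^sub>m k" and Aic: "Ai \<in> carrier_mat k k"
    using mat_inverse(2)[OF A Ai] by auto
  have ETET: "transpose_mat E * transpose_mat E = 1\<^sub>m k"
    using transpose_mult[OF E E] EE by simp
  have "E * A * transpose_mat E * (transpose_mat E * Ai * E) =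
      E * (A * (transpose_mat E * transpose_mat E) * Ai) * E"
    using E A Aic by (simp add: assoc_mult_mat[of _ k k _ k _ k])
  also have "\<dots> = 1\<^sub>m k"
    using E A Aic by (simp add: ETET AAi EE)
  finally show ?thesis
    using A E Aic by (intro mat_inverse_eq_Some) auto
qed

lemma index_mut_B:
  "i < dim_row B \<Longrightarrow> j < dim_col B \<Longrightarrow> mut_B v B $$ (i,j) =
     (if i = v \<or> j = v then - B $$ (i,j)
      else B $$ (i,j) + pos (B $$ (i,v)) * pos (B $$ (v,j))
        - pos (- B $$ (i,v)) * pos (- B $$ (v,j)))"
  by (simp add: mut_B_def)

lemma pos_mutation_identity:
  "pos x * y + pos (- y) * x = pos x * pos y - pos (- x) * pos (- y)"
  by (cases "x \<ge> 0"; cases "y \<ge> 0") (simp_all add: pos_def max_def algebra_simps)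

lemma mut_B_eq_congruence:
  fixes B :: "int mat" and m v :: nat
  defines "E \<equiv> mutation_mat m v (\<lambda>x. pos (B $$ (x,v)))"
  assumes B: "B \<in> carrier_mat m m" and v: "v < m" and Bvv: "B $$ (v,v) = 0"
    and skew: "\<And>x. x < m \<Longrightarrow> x \<noteq> v \<Longrightarrow> B $$ (v,x) = - B $$ (x,v)"
  shows "mut_B v B = E * B * transpose_mat E"
proof (rule eq_matI)
  fix i j assume "i < dim_row (E * B * transpose_mat E)" "j < dim_col (E * B * transpose_mat E)"
  then have i: "i < m" and j: "j < m"
    by (simp_all add: E_def)
  have EB: "(E * B) $$ (i,y) =
      (if i = v then - B $$ (v,y) else B $$ (i,y) + pos (B $$ (i,v)) * B $$ (v,y))"
    if "y < m" for y
    unfolding E_def by (rule index_mutation_mat_mult[OF B i that v])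
  have "(E * B * transpose_mat E) $$ (i,j) =
      (if j = v then - (E * B) $$ (i,v)
       else (E * B) $$ (i,j) + pos (B $$ (j,v)) * (E * B) $$ (i,v))"
    unfolding E_def using B by (intro index_mult_transpose_mutation_mat[OF _ i j v]) auto
  also have "\<dots> = mut_B v B $$ (i,j)"
  proof (cases "i = v \<or> j = v")
    case True
    then show ?thesis
      using B i j EB[OF j] EB[OF v] Bvv by (auto simp: mut_B_def)
  next
    case False
    then have "pos (B $$ (j,v)) = pos (- B $$ (v,j))"
      using skew[OF j] by simp
    then show ?thesis
      using B i j False EB[OF j] EB[OF v] Bvv pos_mutation_identity[of "B $$ (i,v)" "B $$ (v,j)"]
      by (simp add: mut_B_def algebra_simps)
  qed
  finally show "mut_B v B $$ (i,j) = (E * B * transpose_mat E) $$ (i,j)" ..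
qed (use B in \<open>simp_all add: mut_B_def E_def\<close>)

lemma mut_B_leading_columns:
  assumes "B \<in> carrier_mat m m" and "v < n" and "n \<le> m"
  shows "mut_B v (mat m n (\<lambda>(i,j). B $$ (i,j))) = mat m n (\<lambda>(i,j). mut_B v B $$ (i,j))"
  using assms by (intro eq_matI) (auto simp: mut_B_def)

lemma mut_L_eq_congruence:
  fixes B :: "int mat" and L :: "rat mat"
  assumes L: "L \<in> carrier_mat m m" and skew: "transpose_mat L = - L" and v: "v < m"
    and B: "dim_row B = m" and Bvv: "B $$ (v,v) = 0"
    and p: "\<And>l. l < m \<Longrightarrow> p l = rat_of_int (pos (B $$ (l,v)))"
  shows "mut_L v B L = transpose_mat (mutation_mat m v p) * L * mutation_mat m v p"
proof (rule eq_matI)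
  define E where "E = mutation_mat m v p"
  have E: "E \<in> carrier_mat m m"
    by (simp add: E_def)
  have pv: "p v = 0"
    using p[OF v] by (simp add: Bvv pos_def)
  have sum_p: "(\<Sum>l<dim_row B. rat_of_int (pos (B $$ (l,v))) * f l) = (\<Sum>l<m. p l * f l)" for f
    using B p by (intro sum.cong) simp_all
  fix i j assume "i < dim_row (transpose_mat E * L * E)" "j < dim_col (transpose_mat E * L * E)"
  then have i: "i < m" and j: "j < m"
    using E by simp_all
  have ELE: "(transpose_mat E * L * E) $$ (i,j) =
      (if j = v then - (transpose_mat E * L) $$ (i,v) + (\<Sum>l<m. p l * (transpose_mat E * L) $$ (i,l))
       else (transpose_mat E * L) $$ (i,j))"
    unfolding E_def by (rule index_mult_mutation_mat) (use L i j v pv in auto)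
  have EL: "(transpose_mat E * L) $$ (i,y) =
      (if i = v then - L $$ (v,y) + (\<Sum>l<m. p l * L $$ (l,y)) else L $$ (i,y))"
    if "y < m" for y
    unfolding E_def by (rule index_transpose_mutation_mat_mult) (use L i that v pv in auto)
  show "mut_L v B L $$ (i,j) = (transpose_mat E * L * E) $$ (i,j)"
  proof (cases "i = v \<and> j = v")
    case True
    have "transpose_mat (transpose_mat E * L * E) = - (transpose_mat E * L * E)"
      unfolding transpose_congruence[OF E L] skew using E L by simp
    then have "(transpose_mat E * L * E) $$ (v,v) = 0"
      using E L v by (intro skew_mat_diag_zero) simp_all
    moreover have "L $$ (v,v) = 0"
      using L v skew by (intro skew_mat_diag_zero) simp_all
    ultimately show ?thesis
      using True L v by (simp add: mut_L_def)
  next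
    case False
    then show ?thesis
      using L i j v ELE EL by (auto simp: mut_L_def sum_p)
  qed
qed (use L in \<open>simp_all add: mut_L_def\<close>)

lemma dim_euler_matrix [simp]:
  "dim_row (euler_matrix m n Q) = m" "dim_col (euler_matrix m n Q) = m"
  by (simp_all add: euler_matrix_def)

lemma euler_matrix_carrier [simp]: "euler_matrix m n Q \<in> carrier_mat m m"
  by (simp add: carrier_matI)

lemma index_euler_matrix:
  "i < m \<Longrightarrow> j < m \<Longrightarrow> euler_matrix m n Q $$ (i,j) =
     (if i = j then (if i < n then 0 else 1) else int (uarr Q i j) - int (arrs Q j i))"
  by (simp add: euler_matrix_def)

lemma farr_unfrozen:
  assumes "ice_quiver m n Q" and "v < n"
  shows "farr Q v x = 0" and "farr Q x v = 0"
  using assms unfolding ice_quiver_def by (meson leD neq0_conv)+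

lemma euler_matrix_unfrozen_column:
  assumes Q: "ice_quiver m n Q" and v: "v < n" and x: "x < m" "x \<noteq> v"
  shows "euler_matrix m n Q $$ (x,v) = int (arrs Q x v) - int (arrs Q v x)"
    and "euler_matrix m n Q $$ (v,x) = int (arrs Q v x) - int (arrs Q x v)"
proof -
  have "v < m"
    using Q v by (simp add: ice_quiver_def)
  then show "euler_matrix m n Q $$ (x,v) = int (arrs Q x v) - int (arrs Q v x)"
    and "euler_matrix m n Q $$ (v,x) = int (arrs Q v x) - int (arrs Q x v)"
    using x farr_unfrozen[OF Q v] by (auto simp: index_euler_matrix arrs_def)
qed

definition reverse_at :: "nat \<Rightarrow> (nat \<Rightarrow> nat \<Rightarrow> nat) \<Rightarrow> nat \<Rightarrow> nat \<Rightarrow> nat" where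
  "reverse_at v A i j = (if i = v \<or> j = v then A j i else A i j)"

text \<open>Steps (3) and (4) of the extended mutation, on unfrozen and frozen arrow counts
  \<open>A\<close> and \<open>F\<close>: \<open>k i j\<close> unfrozen arrows \<open>i \<rightarrow> j\<close> cancel against frozen arrows \<open>j \<rightarrow> i\<close> and
  become frozen.\<close>
definition cancel_two_cycles :: "(nat \<Rightarrow> nat \<Rightarrow> nat) \<Rightarrow> (nat \<Rightarrow> nat \<Rightarrow> nat) \<Rightarrow> iquiver" where
  "cancel_two_cycles A F = (let
      A' = (\<lambda>i j. if i = j then A i j else A i j - min (A i j) (A j i));
      k  = (\<lambda>i j. if i = j then 0 else min (A' i j) (F j i))
    in \<lparr>uarr = (\<lambda>i j. A' i j - k i j), farr = (\<lambda>i j. F i j - k j i + k i j)\<rparr>)"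

lemma fz_mut_eq_cancel_two_cycles:
  "fz_mut v Q = cancel_two_cycles
     (reverse_at v (\<lambda>i j. uarr Q i j + arrs Q i v * arrs Q v j)) (reverse_at v (farr Q))"
  unfolding fz_mut_def cancel_two_cycles_def reverse_at_def Let_def ..

lemma net_arrows_cancel_two_cycles:
  assumes "i \<noteq> j"
  shows "int (uarr (cancel_two_cycles A F) i j) - int (arrs (cancel_two_cycles A F) j i) =
    int (A i j) - int (A j i) - int (F j i)"
  using assms by (simp add: cancel_two_cycles_def arrs_def min_def)

lemma euler_matrix_fz_mut:
  assumes Q: "ice_quiver m n Q" and v: "v < n"
    and loops: "uarr Q v v = 0" "farr Q v v = 0"
    and two_cycles: "\<And>u. u \<noteq> v \<Longrightarrow> arrs Q v u = 0 \<or> arrs Q u v = 0"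
  shows "euler_matrix m n (fz_mut v Q) = mut_B v (euler_matrix m n Q)"
proof (rule eq_matI)
  define B where "B = euler_matrix m n Q"
  have vm: "v < m"
    using Q v by (simp add: ice_quiver_def)
  have avv: "arrs Q v v = 0"
    using loops by (simp add: arrs_def)
  note farr_v = farr_unfrozen[OF Q v]
  have pos_column: "pos (B $$ (x,v)) = int (arrs Q x v)" "pos (- B $$ (x,v)) = int (arrs Q v x)"
    "pos (B $$ (v,x)) = int (arrs Q v x)" "pos (- B $$ (v,x)) = int (arrs Q x v)"
    if "x < m" "x \<noteq> v" for x
    using euler_matrix_unfrozen_column[OF Q v that] two_cycles[OF that(2)]
    by (auto simp: B_def pos_def)
  fix i j
  assume "i < dim_row (mut_B v (euler_matrix m n Q))" "j < dim_col (mut_B v (euler_matrix m n Q))"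
  then have i: "i < m" and j: "j < m"
    by (simp_all add: mut_B_def euler_matrix_def)
  show "euler_matrix m n (fz_mut v Q) $$ (i,j) = mut_B v (euler_matrix m n Q) $$ (i,j)"
  proof (cases "i = j")
    case True
    then show ?thesis
      using i vm v pos_column[OF i] by (auto simp: mut_B_def euler_matrix_def B_def)
  next
    case False
    have "euler_matrix m n (fz_mut v Q) $$ (i,j) =
        int (reverse_at v (\<lambda>i j. uarr Q i j + arrs Q i v * arrs Q v j) i j)
        - int (reverse_at v (\<lambda>i j. uarr Q i j + arrs Q i v * arrs Q v j) j i)
        - int (reverse_at v (farr Q) j i)"
      using i j False
      by (simp add: index_euler_matrix fz_mut_eq_cancel_two_cycles net_arrows_cancel_two_cycles)
    also have "\<dots> = mut_B v B $$ (i,j)"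
    proof (cases "i = v \<or> j = v")
      case True
      then show ?thesis
        using i j False vm avv farr_v
        by (auto simp: reverse_at_def index_mut_B B_def index_euler_matrix arrs_def)
    next
      case ij: False
      then have "mut_B v B $$ (i,j) = B $$ (i,j)
          + int (arrs Q i v) * int (arrs Q v j) - int (arrs Q v i) * int (arrs Q j v)"
        using i j by (simp add: index_mut_B B_def pos_column[simplified B_def])
      then show ?thesis
        using i j False ij by (simp add: reverse_at_def B_def index_euler_matrix arrs_def)
    qed
    finally show ?thesis
      by (simp add: B_def)
  qed
qed (simp_all add: mut_B_def euler_matrix_def)

lemma Lambda_carrier_skew:
  assumes "det (euler_matrix m n Q) \<noteq> 0"
  shows "Lambda m n Q \<in> carrier_mat m m" and "transpose_mat (Lambda m n Q) = - Lambda m n Q"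
proof -
  have Bc: "map_mat rat_of_int (euler_matrix m n Q) \<in> carrier_mat m m"
    by (simp add: euler_matrix_def)
  obtain Bi where Bi: "mat_inverse (map_mat rat_of_int (euler_matrix m n Q)) = Some Bi"
    using mat_inverse_exists[OF Bc] assms by auto
  then have "Bi \<in> carrier_mat m m"
    using mat_inverse(2)[OF Bc] by auto
  moreover have "Lambda m n Q = rat_of_int \<bar>det (euler_matrix m n Q)\<bar> \<cdot>\<^sub>m (transpose_mat Bi - Bi)"
    by (simp add: Lambda_def Bi)
  ultimately show "Lambda m n Q \<in> carrier_mat m m" "transpose_mat (Lambda m n Q) = - Lambda m n Q"
    by (auto intro!: eq_matI simp: algebra_simps)
qed

lemma Lambda_congruence:
  fixes E :: "int mat"
  defines "Er \<equiv> map_mat rat_of_int E"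
  assumes E: "E \<in> carrier_mat m m" and EE: "E * E = 1\<^sub>m m"
    and cong: "euler_matrix m n Q' = E * euler_matrix m n Q * transpose_mat E"
    and det: "det (euler_matrix m n Q) \<noteq> 0"
  shows "Lambda m n Q' = transpose_mat Er * Lambda m n Q * Er"
proof -
  define Bh where "Bh = map_mat rat_of_int (euler_matrix m n Q)"
  define d where "d = rat_of_int \<bar>det (euler_matrix m n Q)\<bar>"
  have Er: "Er \<in> carrier_mat m m"
    using E by (simp add: Er_def)
  have Bh: "Bh \<in> carrier_mat m m"
    by (simp add: Bh_def)
  have ErEr: "Er * Er = 1\<^sub>m m"
    unfolding Er_def of_int_hom.mat_hom_mult[OF E E, symmetric] EE by (rule of_int_hom.mat_hom_one)
  have cong': "map_mat rat_of_int (euler_matrix m n Q') = Er * Bh * transpose_mat Er"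
    unfolding cong Er_def Bh_def using E
    by (simp add: of_int_hom.mat_hom_mult[of _ m m _ m] map_mat_transpose)
  have det_eq: "det (euler_matrix m n Q') = det (euler_matrix m n Q)"
    unfolding cong using E EE by (intro det_involution_congruence) simp_all
  obtain Bi where Bi: "mat_inverse Bh = Some Bi"
    using mat_inverse_exists[OF Bh] det by (auto simp: Bh_def)
  then have Bic: "Bi \<in> carrier_mat m m"
    using mat_inverse(2)[OF Bh] by auto
  have Bi': "mat_inverse (map_mat rat_of_int (euler_matrix m n Q')) =
      Some (transpose_mat Er * Bi * Er)"
    unfolding cong' by (rule mat_inverse_involution_congruence[OF Bh Er ErEr Bi])
  have "Lambda m n Q' =
      d \<cdot>\<^sub>m (transpose_mat Er * transpose_mat Bi * Er - transpose_mat Er * Bi * Er)"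
    unfolding Lambda_def Let_def Bi' option.sel transpose_congruence[OF Er Bic] det_eq d_def ..
  also have "\<dots> = transpose_mat Er * (d \<cdot>\<^sub>m (transpose_mat Bi - Bi)) * Er"
    using congruence_smult_minus[OF Er _ Bic] Bic by simp
  also have "d \<cdot>\<^sub>m (transpose_mat Bi - Bi) = Lambda m n Q"
    by (simp add: Lambda_def d_def Bh_def[symmetric] Bi)
  finally show ?thesis .
qed

theorem proposition4p3:
  fixes m n v :: nat and Q :: iquiver
  assumes "ice_quiver m n Q"
    and "det (euler_matrix m n Q) \<noteq> 0"
    and "v < n"
    and "uarr Q v v = 0" and "farr Q v v = 0"
    and "\<And>u. u \<noteq> v \<Longrightarrow> arrs Q v u = 0 \<or> arrs Q u v = 0"
  shows "det (euler_matrix m n (fz_mut v Q)) \<noteq> 0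
    \<and> mut_B v (Btilde m n Q) = Btilde m n (fz_mut v Q)
    \<and> mut_L v (Btilde m n Q) (Lambda m n Q) = Lambda m n (fz_mut v Q)"
proof -
  define B where "B = euler_matrix m n Q"
  define E where "E = mutation_mat m v (\<lambda>x. pos (B $$ (x,v)))"
  define Er where "Er = map_mat rat_of_int E"
  have nm: "n \<le> m" and vm: "v < m"
    using assms(1,3) by (auto simp: ice_quiver_def)
  have EE: "E * E = 1\<^sub>m m"
    unfolding E_def using vm by (rule mutation_mat_involution)
  have mut: "euler_matrix m n (fz_mut v Q) = mut_B v B"
    unfolding B_def using assms(1,3-6) by (rule euler_matrix_fz_mut)
  also have "\<dots> = E * B * transpose_mat E"
    unfolding E_def using vm assms(3) euler_matrix_unfrozen_column[OF assms(1,3)]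
    by (intro mut_B_eq_congruence) (auto simp: B_def index_euler_matrix)
  finally have cong: "euler_matrix m n (fz_mut v Q) = E * B * transpose_mat E" .
  have "det (euler_matrix m n (fz_mut v Q)) = det B"
    unfolding cong using EE by (intro det_involution_congruence) (simp_all add: E_def B_def)
  moreover have "mut_B v (Btilde m n Q) = Btilde m n (fz_mut v Q)"
    unfolding Btilde_def mut B_def using assms(3) nm by (intro mut_B_leading_columns) simp_all
  moreover have "Lambda m n (fz_mut v Q) = transpose_mat Er * Lambda m n Q * Er"
    unfolding Er_def using cong EE assms(2) by (intro Lambda_congruence) (simp_all add: E_def B_def)
  moreover have "mut_L v (Btilde m n Q) (Lambda m n Q) = transpose_mat Er * Lambda m n Q * Er"
    unfolding Er_def E_def B_def map_mat_of_int_mutation_mat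
    using Lambda_carrier_skew[OF assms(2)] vm assms(3) nm
    by (intro mut_L_eq_congruence) (auto simp: Btilde_def index_euler_matrix)
  ultimately show ?thesis
    using assms(2) by (simp add: B_def)
qed

end
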